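(* Let $X_1,\dots,X_n$ be i.i.d. $\mathsf{Bernoulli}(p)$ with $p\in[\frac12,1)$, $Y_k=X_k\oplus V_k$ with $V_1,\dots,V_n$ i.i.d. $\mathsf{Bernoulli}(\alpha)$ independent of $X^n$, $\alpha\in[0,\frac12)$, $\bar\alpha>p$. Let $q=\alpha\bar p+\bar\alpha p$, $\zeta_n(\varepsilon)=\frac{\bar\alpha^n-\varepsilon^n}{(\bar\alpha p)^n-(\alpha\bar p)^n}$, and for each $n$ let $\varepsilon_{\mathsf L}=\varepsilon_{\mathsf L}^{(n)}\in[p,\bar\alpha)$ be such that $\underline{\mathcal{h}}_n^n(\varepsilon)=1-\zeta_n(\varepsilon)q^n$ for all $\varepsilon\in[\varepsilon_{\mathsf L},\bar\alpha]$ (such a number exists). Let $$\Phi(n)=\frac{q^n\bar\alpha^{n-1}}{(\bar\alpha p)^n-(\alpha\bar p)^n}.$$ If $p>\frac12$ and $\alpha>0$, then for all sufficiently large $n$ and all $\varepsilon\in[\varepsilon_{\mathsf L},\bar\alpha]$, $$\underline{\mathcal{h}}_n(\varepsilon)-\mathcal{h}^{\mathsf i}_n(\varepsilon)\ge(\bar\alpha-\varepsilon)[\Phi(1)-\Phi(n)].$$ If $p=\frac12$, then for every $n\ge1$ and every $\varepsilon\in[\varepsilon_{\mathsf L},\bar\alpha]$, $$\mathcal{h}^{\mathsf i}_n(\varepsilon)\le\underline{\mathcal{h}}_n(\varepsilon)\le\mathcal{h}^{\mathsf i}_n(\varepsilon)+\frac{\alpha}{2\bar\alpha}.$$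
   Context: $\bar a=1-a$; $\oplus$ is addition mod 2. $\mathsf{P}_{\mathsf{c}}(X^n|Z^n)=\sum_{z^n}\max_{x^n}P_{X^nZ^n}(x^n,z^n)$. $\underline{\mathcal{h}}_n(\varepsilon)=\sup\{\mathsf{P}_{\mathsf{c}}^{1/n}(Y^n|Z^n): P_{Z^n|Y^n},\ \mathcal{Z}^n=\{0,1\}^n,\ X^n - Y^n - Z^n,\ \mathsf{P}_{\mathsf{c}}^{1/n}(X^n|Z^n)\le\varepsilon\}$ for $\varepsilon\in[p,\bar\alpha]$. $\mathcal{h}^{\mathsf i}_n(\varepsilon)$ is the same supremum restricted to memoryless filters $P_{Z^n|Y^n}(z^n|y^n)=\prod_{k=1}^n\mathsf{W}(z_k|y_k)$ with a single binary channel $\mathsf{W}$. *)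

theory Defs
  imports Complex_Main
begin

text \<open>Binary sequences of length n are bool lists; True = 1, False = 0; xor is (\<noteq>).\<close>

definition seqs :: "nat \<Rightarrow> bool list set" where
  "seqs n = {xs. length xs = n}"

definition bern :: "real \<Rightarrow> bool \<Rightarrow> real" where
  "bern a b = (if b then a else 1 - a)"

text \<open>Joint pmf of (X^n, Y^n): X_k iid Bernoulli(p), Y_k = X_k xor V_k, V_k iid Bernoulli(alpha).\<close>
definition PXY :: "real \<Rightarrow> real \<Rightarrow> bool list \<Rightarrow> bool list \<Rightarrow> real" where
  "PXY p \<alpha> xs ys = prod_list (map2 (\<lambda>x y. bern p x * bern \<alpha> (x \<noteq> y)) xs ys)"

definition PY :: "nat \<Rightarrow> real \<Rightarrow> real \<Rightarrow> bool list \<Rightarrow> real" where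
  "PY n p \<alpha> ys = (\<Sum>xs\<in>seqs n. PXY p \<alpha> xs ys)"

text \<open>A filter P_{Z^n|Y^n} with Z^n in {0,1}^n (Markov chain X^n - Y^n - Z^n built in).\<close>
definition kernel :: "nat \<Rightarrow> (bool list \<Rightarrow> bool list \<Rightarrow> real) \<Rightarrow> bool" where
  "kernel n K \<longleftrightarrow> (\<forall>y\<in>seqs n. \<forall>z\<in>seqs n. 0 \<le> K y z) \<and> (\<forall>y\<in>seqs n. (\<Sum>z\<in>seqs n. K y z) = 1)"

definition PcX :: "nat \<Rightarrow> real \<Rightarrow> real \<Rightarrow> (bool list \<Rightarrow> bool list \<Rightarrow> real) \<Rightarrow> real" where
  "PcX n p \<alpha> K = (\<Sum>z\<in>seqs n. Max ((\<lambda>x. \<Sum>y\<in>seqs n. PXY p \<alpha> x y * K y z) ` seqs n))"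

definition PcY :: "nat \<Rightarrow> real \<Rightarrow> real \<Rightarrow> (bool list \<Rightarrow> bool list \<Rightarrow> real) \<Rightarrow> real" where
  "PcY n p \<alpha> K = (\<Sum>z\<in>seqs n. Max ((\<lambda>y. PY n p \<alpha> y * K y z) ` seqs n))"

definition hlow :: "nat \<Rightarrow> real \<Rightarrow> real \<Rightarrow> real \<Rightarrow> real" where
  "hlow n p \<alpha> \<epsilon> = Sup {root n (PcY n p \<alpha> K) | K. kernel n K \<and> root n (PcX n p \<alpha> K) \<le> \<epsilon>}"

definition channel :: "(bool \<Rightarrow> bool \<Rightarrow> real) \<Rightarrow> bool" where
  "channel W \<longleftrightarrow> (\<forall>y z. 0 \<le> W y z) \<and> (\<forall>y. W y True + W y False = 1)"

text \<open>Memoryless filter: P(z^n|y^n) = prod_k W(z_k|y_k), W y z = W(z|y).\<close>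
definition memK :: "(bool \<Rightarrow> bool \<Rightarrow> real) \<Rightarrow> bool list \<Rightarrow> bool list \<Rightarrow> real" where
  "memK W ys zs = prod_list (map2 W ys zs)"

definition hind :: "nat \<Rightarrow> real \<Rightarrow> real \<Rightarrow> real \<Rightarrow> real" where
  "hind n p \<alpha> \<epsilon> = Sup {root n (PcY n p \<alpha> (memK W)) | W. channel W \<and> root n (PcX n p \<alpha> (memK W)) \<le> \<epsilon>}"

definition zeta :: "real \<Rightarrow> real \<Rightarrow> nat \<Rightarrow> real \<Rightarrow> real" where
  "zeta p \<alpha> n \<epsilon> = ((1 - \<alpha>) ^ n - \<epsilon> ^ n) / (((1 - \<alpha>) * p) ^ n - (\<alpha> * (1 - p)) ^ n)"

definition qpar :: "real \<Rightarrow> real \<Rightarrow> real" where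
  "qpar p \<alpha> = \<alpha> * (1 - p) + (1 - \<alpha>) * p"

definition Phi :: "real \<Rightarrow> real \<Rightarrow> nat \<Rightarrow> real" where
  "Phi p \<alpha> n = (qpar p \<alpha> ^ n * (1 - \<alpha>) ^ (n - 1)) / (((1 - \<alpha>) * p) ^ n - (\<alpha> * (1 - p)) ^ n)"

end

theory Submission
  imports Defs
begin

text \<open>
  For a memoryless filter W every n-letter success probability factorises into n copies of its
  single-letter value, so hind is the single-letter quantity
  sup {P_c(Y|Z) : P_c(X|Z) \<le> \<epsilon>} over binary channels W and does not depend on n.
  Any guess of Y from Z, reused as a guess of X, yields the linear trade-off
  (p - \<alpha>) (P_c(Y|Z) - 1) \<le> q (P_c(X|Z) - (1 - \<alpha>)), whence hind \<le> 1 - (1 - \<alpha> - \<epsilon>) \<Phi>(1).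

  With t = \<epsilon> / (1 - \<alpha>) and K = ((1 - \<alpha>) q)^n / (((1 - \<alpha>) p)^n - (\<alpha> (1 - p))^n), the closed
  form of hlow reads hlow^n = 1 - K (1 - t^n). For p > 1/2 and \<alpha> > 0 we have q < p, so
  K \<le> 1 for large n, and convexity of t^n gives hlow \<ge> 1 - K (1 - t) = 1 - (1 - \<alpha> - \<epsilon>) \<Phi>(n).

  For p = 1/2 the closed form gives hlow \<le> \<epsilon> / (1 - \<alpha>), whereas the binary symmetric channel
  with crossover (1 - \<alpha> - \<epsilon>) / (1 - 2 \<alpha>) is feasible and attains
  1 - (1 - \<alpha> - \<epsilon>) / (1 - 2 \<alpha>), which is within \<alpha> / (2 (1 - \<alpha>)) of \<epsilon> / (1 - \<alpha>).
\<close>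

lemma seqs_Suc: "seqs (Suc n) = Cons True ` seqs n \<union> Cons False ` seqs n"
proof
  show "seqs (Suc n) \<subseteq> Cons True ` seqs n \<union> Cons False ` seqs n"
  proof
    fix xs assume "xs \<in> seqs (Suc n)"
    then obtain b ys where "xs = b # ys" "length ys = n" by (auto simp: seqs_def length_Suc_conv)
    then show "xs \<in> Cons True ` seqs n \<union> Cons False ` seqs n" by (cases b) (auto simp: seqs_def)
  qed
qed (auto simp: seqs_def)

lemma seqs_0: "seqs 0 = {[]}"
  by (auto simp: seqs_def)

lemma finite_seqs: "finite (seqs n)"
  by (induction n) (auto simp: seqs_0 seqs_Suc)

lemma seqs_not_empty: "seqs n \<noteq> {}"
  by (auto simp: seqs_def intro: exI[of _ "replicate n True"])

lemma seqs_SucE: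
  assumes "xs \<in> seqs (Suc n)"
  obtains b ys where "xs = b # ys" "ys \<in> seqs n"
  using assms by (cases xs) (auto simp: seqs_def)

lemma sum_seqs_Suc:
  "(\<Sum>xs\<in>seqs (Suc n). f xs) = (\<Sum>xs\<in>seqs n. f (True # xs)) + (\<Sum>xs\<in>seqs n. f (False # xs))"
  unfolding seqs_Suc by (subst sum.union_disjoint) (auto simp: finite_seqs sum.reindex)

lemma Max_seqs_Suc:
  "Max (f ` seqs (Suc n)) = max (Max ((\<lambda>xs. f (True # xs)) ` seqs n)) (Max ((\<lambda>xs. f (False # xs)) ` seqs n))"
  unfolding seqs_Suc image_Un image_image by (rule Max_Un) (auto simp: finite_seqs seqs_not_empty)

lemma Max_const_mult:
  fixes c :: real
  assumes "0 \<le> c" "finite A" "A \<noteq> {}"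
  shows "Max ((\<lambda>x. c * f x) ` A) = c * Max (f ` A)"
proof -
  have "mono (\<lambda>x::real. c * x)" using assms(1) by (auto simp: mono_def mult_left_mono)
  from mono_Max_commute[OF this] assms(2,3) show ?thesis by (simp add: image_image)
qed

lemma sum_seqs_prod_list:
  fixes h :: "bool \<Rightarrow> 'a::comm_semiring_1"
  shows "(\<Sum>z\<in>seqs n. prod_list (map h z)) = (h True + h False) ^ n"
  by (induction n) (simp_all add: seqs_0 sum_seqs_Suc sum_distrib_left[symmetric] algebra_simps)

lemma sum_seqs_prod_list_map2_right:
  fixes f :: "bool \<Rightarrow> bool \<Rightarrow> 'a::comm_semiring_1"
  shows "y \<in> seqs n \<Longrightarrow> (\<Sum>z\<in>seqs n. prod_list (map2 f y z)) = prod_list (map (\<lambda>a. f a True + f a False) y)"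
proof (induction n arbitrary: y)
  case (Suc n)
  then obtain a y' where "y = a # y'" "y' \<in> seqs n" by (elim seqs_SucE)
  then show ?case by (simp add: sum_seqs_Suc Suc.IH sum_distrib_left[symmetric] algebra_simps)
qed (simp add: seqs_0)

lemma sum_seqs_prod_list_map2_left:
  fixes f :: "bool \<Rightarrow> bool \<Rightarrow> 'a::comm_semiring_1"
  shows "y \<in> seqs n \<Longrightarrow> (\<Sum>x\<in>seqs n. prod_list (map2 f x y)) = prod_list (map (\<lambda>b. f True b + f False b) y)"
proof (induction n arbitrary: y)
  case (Suc n)
  then obtain b y' where "y = b # y'" "y' \<in> seqs n" by (elim seqs_SucE)
  then show ?case by (simp add: sum_seqs_Suc Suc.IH sum_distrib_left[symmetric] algebra_simps)
qed (simp add: seqs_0)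

lemma sum_seqs_prod_list_map2_mult:
  fixes f g :: "bool \<Rightarrow> bool \<Rightarrow> 'a::comm_semiring_1"
  shows "x \<in> seqs n \<Longrightarrow> z \<in> seqs n \<Longrightarrow>
    (\<Sum>y\<in>seqs n. prod_list (map2 f x y) * prod_list (map2 g y z))
      = prod_list (map2 (\<lambda>a c. f a True * g True c + f a False * g False c) x z)"
proof (induction n arbitrary: x z)
  case (Suc n)
  obtain a x' where x: "x = a # x'" "x' \<in> seqs n" using Suc.prems(1) by (elim seqs_SucE)
  obtain c z' where z: "z = c # z'" "z' \<in> seqs n" using Suc.prems(2) by (elim seqs_SucE)
  show ?case
    by (simp add: x z sum_seqs_Suc Suc.IH sum_distrib_left[symmetric] algebra_simps)
qed (simp add: seqs_0)

lemma Max_seqs_prod_list_map2: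
  fixes G :: "bool \<Rightarrow> bool \<Rightarrow> real"
  assumes G: "\<And>a b. 0 \<le> G a b"
  shows "z \<in> seqs n \<Longrightarrow>
    Max ((\<lambda>x. prod_list (map2 G x z)) ` seqs n) = prod_list (map (\<lambda>c. max (G True c) (G False c)) z)"
proof (induction n arbitrary: z)
  case (Suc n)
  then obtain c z' where z: "z = c # z'" "z' \<in> seqs n" by (elim seqs_SucE)
  have "0 \<le> prod_list (map (\<lambda>c. max (G True c) (G False c)) z')"
    by (rule prod_list_nonneg) (auto intro: max.coboundedI1 G)
  then show ?case
    by (simp add: z Max_seqs_Suc Max_const_mult G finite_seqs seqs_not_empty Suc.IH
        max_mult_distrib_right)
qed (simp add: seqs_0)

lemma prod_list_map_mult_map2:
  fixes f :: "'a \<Rightarrow> 'c::comm_monoid_mult"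
  shows "length xs = length ys \<Longrightarrow>
    prod_list (map f xs) * prod_list (map2 g xs ys) = prod_list (map2 (\<lambda>a b. f a * g a b) xs ys)"
proof (induction xs arbitrary: ys)
  case (Cons a xs)
  then show ?case by (cases ys) (auto simp: mult_ac)
qed simp

definition Pc1 :: "(bool \<Rightarrow> bool \<Rightarrow> real) \<Rightarrow> real" where
  "Pc1 G = max (G True True) (G False True) + max (G True False) (G False False)"

lemma Pc1_nonneg: "(\<And>a b. 0 \<le> G a b) \<Longrightarrow> 0 \<le> Pc1 G"
  unfolding Pc1_def by (intro add_nonneg_nonneg max.coboundedI1)

lemma sum_seqs_Max_prod_list_map2:
  assumes "\<And>a b. 0 \<le> G a b"
  shows "(\<Sum>z\<in>seqs n. Max ((\<lambda>x. prod_list (map2 G x z)) ` seqs n)) = Pc1 G ^ n"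
  by (simp add: Max_seqs_prod_list_map2[OF assms] sum_seqs_prod_list Pc1_def add.commute
      cong: sum.cong)

definition PXZ1 :: "real \<Rightarrow> real \<Rightarrow> (bool \<Rightarrow> bool \<Rightarrow> real) \<Rightarrow> bool \<Rightarrow> bool \<Rightarrow> real" where
  "PXZ1 p \<alpha> W x z = bern p x * bern \<alpha> (x \<noteq> True) * W True z + bern p x * bern \<alpha> (x \<noteq> False) * W False z"

definition PY1 :: "real \<Rightarrow> real \<Rightarrow> bool \<Rightarrow> real" where
  "PY1 p \<alpha> y = bern p True * bern \<alpha> (True \<noteq> y) + bern p False * bern \<alpha> (False \<noteq> y)"

definition PYZ1 :: "real \<Rightarrow> real \<Rightarrow> (bool \<Rightarrow> bool \<Rightarrow> real) \<Rightarrow> bool \<Rightarrow> bool \<Rightarrow> real" where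
  "PYZ1 p \<alpha> W y z = PY1 p \<alpha> y * W y z"

lemma bern_nonneg: "0 \<le> a \<Longrightarrow> a \<le> 1 \<Longrightarrow> 0 \<le> bern a b"
  by (simp add: bern_def)

lemma channel_nonneg: "channel W \<Longrightarrow> 0 \<le> W y z"
  by (simp add: channel_def)

lemma PXZ1_nonneg:
  "0 \<le> p \<Longrightarrow> p \<le> 1 \<Longrightarrow> 0 \<le> \<alpha> \<Longrightarrow> \<alpha> \<le> 1 \<Longrightarrow> channel W \<Longrightarrow> 0 \<le> PXZ1 p \<alpha> W x z"
  by (simp add: PXZ1_def bern_nonneg channel_nonneg)

lemma PYZ1_nonneg:
  "0 \<le> p \<Longrightarrow> p \<le> 1 \<Longrightarrow> 0 \<le> \<alpha> \<Longrightarrow> \<alpha> \<le> 1 \<Longrightarrow> channel W \<Longrightarrow> 0 \<le> PYZ1 p \<alpha> W y z"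
  by (simp add: PYZ1_def PY1_def bern_nonneg channel_nonneg)

lemma PY_eq_prod_list: "y \<in> seqs n \<Longrightarrow> PY n p \<alpha> y = prod_list (map (PY1 p \<alpha>) y)"
  unfolding PY_def PXY_def PY1_def[abs_def] by (simp add: sum_seqs_prod_list_map2_left)

lemma kernel_memK:
  assumes "channel W"
  shows "kernel n (memK W)"
proof -
  have "prod_list (map (\<lambda>a. W a True + W a False) y) = 1" for y
    using assms by (induction y) (simp_all add: channel_def)
  then show ?thesis
    using assms unfolding kernel_def memK_def
    by (auto simp: sum_seqs_prod_list_map2_right channel_nonneg intro!: prod_list_nonneg)
qed

lemma PcX_memK:
  assumes "0 \<le> p" "p \<le> 1" "0 \<le> \<alpha>" "\<alpha> \<le> 1" "channel W"
  shows "PcX n p \<alpha> (memK W) = Pc1 (PXZ1 p \<alpha> W) ^ n"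
proof -
  have "(\<Sum>y\<in>seqs n. PXY p \<alpha> x y * memK W y z) = prod_list (map2 (PXZ1 p \<alpha> W) x z)"
    if "x \<in> seqs n" "z \<in> seqs n" for x z
    using that unfolding PXY_def memK_def PXZ1_def[abs_def] by (rule sum_seqs_prod_list_map2_mult)
  then show ?thesis
    unfolding PcX_def
    by (simp add: sum_seqs_Max_prod_list_map2[symmetric] PXZ1_nonneg assms cong: image_cong)
qed

lemma PcY_memK:
  assumes "0 \<le> p" "p \<le> 1" "0 \<le> \<alpha>" "\<alpha> \<le> 1" "channel W"
  shows "PcY n p \<alpha> (memK W) = Pc1 (PYZ1 p \<alpha> W) ^ n"
proof -
  have "PY n p \<alpha> y * memK W y z = prod_list (map2 (PYZ1 p \<alpha> W) y z)"
    if "y \<in> seqs n" "z \<in> seqs n" for y z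
    using that
    by (simp add: PY_eq_prod_list memK_def PYZ1_def seqs_def prod_list_map_mult_map2)
  then show ?thesis
    unfolding PcY_def
    by (simp add: sum_seqs_Max_prod_list_map2[symmetric] PYZ1_nonneg assms cong: image_cong)
qed

lemma PcY_le_1:
  assumes "0 \<le> p" "p \<le> 1" "0 \<le> \<alpha>" "\<alpha> \<le> 1" "kernel n K"
  shows "PcY n p \<alpha> K \<le> 1"
proof -
  have PY_nonneg: "0 \<le> PY n p \<alpha> y" if "y \<in> seqs n" for y
    using assms that unfolding PY_eq_prod_list[OF that]
    by (intro prod_list_nonneg) (auto simp: PY1_def bern_nonneg)
  have K: "\<And>y z. y \<in> seqs n \<Longrightarrow> z \<in> seqs n \<Longrightarrow> 0 \<le> K y z"
    "\<And>y. y \<in> seqs n \<Longrightarrow> (\<Sum>z\<in>seqs n. K y z) = 1"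
    using assms(5) by (auto simp: kernel_def)
  have "PcY n p \<alpha> K \<le> (\<Sum>z\<in>seqs n. \<Sum>y\<in>seqs n. PY n p \<alpha> y * K y z)"
    unfolding PcY_def using PY_nonneg K(1)
    by (intro sum_mono) (auto simp: finite_seqs seqs_not_empty intro!: member_le_sum)
  also have "\<dots> = (\<Sum>y\<in>seqs n. PY n p \<alpha> y * (\<Sum>z\<in>seqs n. K y z))"
    by (subst sum.swap) (simp add: sum_distrib_left)
  also have "\<dots> = (\<Sum>y\<in>seqs n. prod_list (map (PY1 p \<alpha>) y))"
    by (simp add: K(2) PY_eq_prod_list)
  also have "\<dots> = 1"
    by (simp add: sum_seqs_prod_list PY1_def bern_def algebra_simps)
  finally show ?thesis .
qed

definition bsc :: "real \<Rightarrow> bool \<Rightarrow> bool \<Rightarrow> real" where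
  "bsc \<beta> y z = (if y = z then 1 - \<beta> else \<beta>)"

lemma channel_bsc: "0 \<le> \<beta> \<Longrightarrow> \<beta> \<le> 1 \<Longrightarrow> channel (bsc \<beta>)"
  by (auto simp: channel_def bsc_def)

lemma Pc1_PXZ1_bsc_half: "Pc1 (PXZ1 p \<alpha> (bsc (1/2))) = max p (1 - p)"
  by (simp add: Pc1_def PXZ1_def bsc_def bern_def max_def field_simps)

context
  fixes n :: nat and p \<alpha> \<epsilon> :: real
  assumes n: "0 < n" and p: "0 \<le> p" "p \<le> 1" and \<alpha>: "0 \<le> \<alpha>" "\<alpha> \<le> 1"
begin

lemma root_PcX_memK: "channel W \<Longrightarrow> root n (PcX n p \<alpha> (memK W)) = Pc1 (PXZ1 p \<alpha> W)"
  using n p \<alpha> by (simp add: PcX_memK real_root_pos2 Pc1_nonneg PXZ1_nonneg)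

lemma root_PcY_memK: "channel W \<Longrightarrow> root n (PcY n p \<alpha> (memK W)) = Pc1 (PYZ1 p \<alpha> W)"
  using n p \<alpha> by (simp add: PcY_memK real_root_pos2 Pc1_nonneg PYZ1_nonneg)

lemma hind_eq_Sup_Pc1:
  "hind n p \<alpha> \<epsilon> = Sup {Pc1 (PYZ1 p \<alpha> W) | W. channel W \<and> Pc1 (PXZ1 p \<alpha> W) \<le> \<epsilon>}"
  unfolding hind_def
  by (intro arg_cong[where f = Sup] Collect_cong) (metis root_PcX_memK root_PcY_memK)

lemma bdd_above_hlow_set:
  "bdd_above {root n (PcY n p \<alpha> K) | K. kernel n K \<and> root n (PcX n p \<alpha> K) \<le> \<epsilon>}"
  using n p \<alpha> PcY_le_1 by (intro bdd_aboveI[where M = 1]) auto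

lemma Pc1_set_subset_hlow_set:
  "{Pc1 (PYZ1 p \<alpha> W) | W. channel W \<and> Pc1 (PXZ1 p \<alpha> W) \<le> \<epsilon>}
     \<subseteq> {root n (PcY n p \<alpha> K) | K. kernel n K \<and> root n (PcX n p \<alpha> K) \<le> \<epsilon>}"
  using kernel_memK by (auto simp: root_PcX_memK[symmetric] root_PcY_memK[symmetric])

lemma Pc1_set_not_empty:
  "max p (1 - p) \<le> \<epsilon> \<Longrightarrow> {Pc1 (PYZ1 p \<alpha> W) | W. channel W \<and> Pc1 (PXZ1 p \<alpha> W) \<le> \<epsilon>} \<noteq> {}"
  using channel_bsc[of "1/2"] Pc1_PXZ1_bsc_half by auto

lemma Pc1_le_hind:
  "channel W \<Longrightarrow> Pc1 (PXZ1 p \<alpha> W) \<le> \<epsilon> \<Longrightarrow> Pc1 (PYZ1 p \<alpha> W) \<le> hind n p \<alpha> \<epsilon>"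
  unfolding hind_eq_Sup_Pc1
  by (rule cSup_upper[OF _ bdd_above_mono[OF bdd_above_hlow_set Pc1_set_subset_hlow_set]]) auto

lemma hind_le_hlow: "max p (1 - p) \<le> \<epsilon> \<Longrightarrow> hind n p \<alpha> \<epsilon> \<le> hlow n p \<alpha> \<epsilon>"
  unfolding hind_eq_Sup_Pc1 hlow_def
  by (rule cSup_subset_mono[OF Pc1_set_not_empty bdd_above_hlow_set Pc1_set_subset_hlow_set])

lemma hind_le:
  assumes "max p (1 - p) \<le> \<epsilon>"
    and "\<And>W. channel W \<Longrightarrow> Pc1 (PXZ1 p \<alpha> W) \<le> \<epsilon> \<Longrightarrow> Pc1 (PYZ1 p \<alpha> W) \<le> B"
  shows "hind n p \<alpha> \<epsilon> \<le> B"
  unfolding hind_eq_Sup_Pc1 using Pc1_set_not_empty[OF assms(1)] assms(2)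
  by (intro cSup_least) auto

end

lemma Pc1_PYZ1_PXZ1_tradeoff:
  assumes p: "1/2 \<le> p" "p \<le> 1" and \<alpha>: "0 \<le> \<alpha>" "\<alpha> \<le> 1/2" and W: "channel W"
  shows "(p - \<alpha>) * (Pc1 (PYZ1 p \<alpha> W) - 1) \<le> qpar p \<alpha> * (Pc1 (PXZ1 p \<alpha> W) - (1 - \<alpha>))"
proof -
  define q a b where "q = qpar p \<alpha>" and "a = W True True" and "b = W False True"
  define X where "X = Pc1 (PXZ1 p \<alpha> W)"
  have W_False: "W True False = 1 - a" "W False False = 1 - b"
    using W unfolding channel_def a_def b_def by (simp_all add: eq_diff_eq add.commute)
  have b: "0 \<le> b" "0 \<le> 1 - b"
    using W W_False(2) unfolding channel_def b_def by (metis diff_ge_0_iff_ge)+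
  have q: "q = \<alpha> * (1 - p) + (1 - \<alpha>) * p"
    by (simp add: q_def qpar_def)
  have "0 \<le> q"
    using p \<alpha> unfolding q by (intro add_nonneg_nonneg mult_nonneg_nonneg) auto
  have X: "X = max (p*(1-\<alpha>)*a + p*\<alpha>*b) ((1-p)*\<alpha>*a + (1-p)*(1-\<alpha>)*b)
      + max (p*(1-\<alpha>)*(1-a) + p*\<alpha>*(1-b)) ((1-p)*\<alpha>*(1-a) + (1-p)*(1-\<alpha>)*(1-b))"
    by (simp add: X_def Pc1_def PXZ1_def bern_def W_False a_def b_def)
  have Y: "Pc1 (PYZ1 p \<alpha> W) = max (q * a) ((1 - q) * b) + max (q * (1 - a)) ((1 - q) * (1 - b))"
    by (simp add: Pc1_def PYZ1_def PY1_def bern_def W_False a_def b_def q algebra_simps)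
  \<comment> \<open>Each guess of Y from Z, reused for X, beats the linear bound by c 2 \<alpha> (1 - \<alpha>) (2 p - 1) \<ge> 0.\<close>
  have by_guess: "(p - \<alpha>) * (y - 1) \<le> q * (X - (1 - \<alpha>))"
    if "s \<le> X" "0 \<le> c"
      and "q * (s - (1 - \<alpha>)) - (p - \<alpha>) * (y - 1) = c * (2 * \<alpha> * (1 - \<alpha>) * (2 * p - 1))"
    for s y c
  proof -
    have "0 \<le> c * (2 * \<alpha> * (1 - \<alpha>) * (2 * p - 1))"
      using that(2) p \<alpha> by (intro mult_nonneg_nonneg) auto
    then show ?thesis
      using that(3) mult_left_mono[OF that(1) \<open>0 \<le> q\<close>] by (simp add: algebra_simps)
  qed
  have "Pc1 (PYZ1 p \<alpha> W) \<in> {q * a + (1 - q) * (1 - b), (1 - q) * b + q * (1 - a),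
      q * a + q * (1 - a), (1 - q) * b + (1 - q) * (1 - b)}"
    unfolding Y by (simp add: max_def)
  then consider "Pc1 (PYZ1 p \<alpha> W) = q * a + (1 - q) * (1 - b)"
    | "Pc1 (PYZ1 p \<alpha> W) = q * (1 - a) + (1 - q) * b"
    | "Pc1 (PYZ1 p \<alpha> W) = q" | "Pc1 (PYZ1 p \<alpha> W) = 1 - q"
    by (auto simp: algebra_simps)
  then show ?thesis
  proof cases
    case 1
    have "p*(1-\<alpha>)*a + p*\<alpha>*b + ((1-p)*\<alpha>*(1-a) + (1-p)*(1-\<alpha>)*(1-b)) \<le> X"
      unfolding X by (intro add_mono max.cobounded1 max.cobounded2)
    then show ?thesis
      unfolding 1 X_def[symmetric] q_def[symmetric]
      by (rule by_guess[OF _ b(1)]) (simp add: q algebra_simps)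
  next
    case 2
    have "(1-p)*\<alpha>*a + (1-p)*(1-\<alpha>)*b + (p*(1-\<alpha>)*(1-a) + p*\<alpha>*(1-b)) \<le> X"
      unfolding X by (intro add_mono max.cobounded1 max.cobounded2)
    then show ?thesis
      unfolding 2 X_def[symmetric] q_def[symmetric]
      by (rule by_guess[OF _ b(2)]) (simp add: q algebra_simps)
  next
    case 3
    have "p*(1-\<alpha>)*a + p*\<alpha>*b + (p*(1-\<alpha>)*(1-a) + p*\<alpha>*(1-b)) \<le> X"
      unfolding X by (intro add_mono max.cobounded1 max.cobounded2)
    then show ?thesis
      unfolding 3 X_def[symmetric] q_def[symmetric]
      by (rule by_guess[OF _ zero_le_one]) (simp add: q algebra_simps)
  next
    case 4
    have "(1-p)*\<alpha>*a + (1-p)*(1-\<alpha>)*b + ((1-p)*\<alpha>*(1-a) + (1-p)*(1-\<alpha>)*(1-b)) \<le> X"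
      unfolding X by (intro add_mono max.cobounded1 max.cobounded2)
    then show ?thesis
      unfolding 4 X_def[symmetric] q_def[symmetric]
      by (rule by_guess[OF _ order_refl]) (simp add: q algebra_simps)
  qed
qed

lemma Phi_1: "p \<noteq> \<alpha> \<Longrightarrow> Phi p \<alpha> 1 = qpar p \<alpha> / (p - \<alpha>)"
  by (simp add: Phi_def algebra_simps)

lemma hind_le_one_minus_Phi_1:
  assumes n: "0 < n" and p: "1/2 \<le> p" "p \<le> 1" and \<alpha>: "0 \<le> \<alpha>" "\<alpha> < 1/2" and \<epsilon>: "p \<le> \<epsilon>"
  shows "hind n p \<alpha> \<epsilon> \<le> 1 - (1 - \<alpha> - \<epsilon>) * Phi p \<alpha> 1"
proof (rule hind_le)
  fix W assume W: "channel W" "Pc1 (PXZ1 p \<alpha> W) \<le> \<epsilon>"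
  have "0 \<le> qpar p \<alpha>"
    using p \<alpha> unfolding qpar_def by (intro add_nonneg_nonneg mult_nonneg_nonneg) auto
  have "(p - \<alpha>) * (Pc1 (PYZ1 p \<alpha> W) - 1) \<le> qpar p \<alpha> * (Pc1 (PXZ1 p \<alpha> W) - (1 - \<alpha>))"
    using p \<alpha> W(1) by (intro Pc1_PYZ1_PXZ1_tradeoff) auto
  also have "\<dots> \<le> qpar p \<alpha> * (\<epsilon> - (1 - \<alpha>))"
    using W(2) \<open>0 \<le> qpar p \<alpha>\<close> by (intro mult_left_mono) auto
  finally have "Pc1 (PYZ1 p \<alpha> W) - 1 \<le> qpar p \<alpha> * (\<epsilon> - (1 - \<alpha>)) / (p - \<alpha>)"
    using p \<alpha> by (simp add: pos_le_divide_eq mult.commute)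
  moreover have "p \<noteq> \<alpha>"
    using p \<alpha> by simp
  ultimately show "Pc1 (PYZ1 p \<alpha> W) \<le> 1 - (1 - \<alpha> - \<epsilon>) * Phi p \<alpha> 1"
    unfolding Phi_1[OF \<open>p \<noteq> \<alpha>\<close>] by (simp add: field_simps)
qed (use n p \<alpha> \<epsilon> in auto)

lemma hlow_nonneg:
  assumes "0 < n" "0 \<le> p" "p \<le> 1" "0 \<le> \<alpha>" "\<alpha> \<le> 1" "max p (1 - p) \<le> \<epsilon>"
  shows "0 \<le> hlow n p \<alpha> \<epsilon>"
proof -
  have "0 \<le> Pc1 (PYZ1 p \<alpha> (bsc (1/2)))"
    using assms channel_bsc[of "1/2"] by (intro Pc1_nonneg PYZ1_nonneg) auto
  also have "\<dots> \<le> hind n p \<alpha> \<epsilon>"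
    using assms channel_bsc[of "1/2"] by (intro Pc1_le_hind) (auto simp: Pc1_PXZ1_bsc_half)
  also have "\<dots> \<le> hlow n p \<alpha> \<epsilon>"
    using assms by (rule hind_le_hlow)
  finally show ?thesis .
qed

lemma power_convex_comb_le:
  fixes K t :: real
  assumes "0 \<le> K" "K \<le> 1" "0 \<le> t" "t \<le> 1"
  shows "(1 - K + K * t) ^ n \<le> 1 - K + K * t ^ n"
proof (induction n)
  case (Suc n)
  have "(1 - K + K * t) ^ Suc n \<le> (1 - K + K * t) * (1 - K + K * t ^ n)"
    using Suc assms by (simp add: mult_left_mono)
  also have "\<dots> = 1 - K + K * t ^ Suc n - (1 - K) * K * (1 - t) * (1 - t ^ n)"
    by (simp add: algebra_simps)
  also have "\<dots> \<le> 1 - K + K * t ^ Suc n"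
    using assms by (simp add: power_le_one)
  finally show ?case .
qed simp

lemma hlow_ge_one_minus_Phi:
  assumes p: "1/2 \<le> p" "p < 1" and \<alpha>: "0 \<le> \<alpha>" "\<alpha> < 1/2" and n: "1 \<le> n"
    and large: "((1 - \<alpha>) * qpar p \<alpha>) ^ n + (\<alpha> * (1 - p)) ^ n \<le> ((1 - \<alpha>) * p) ^ n"
    and \<epsilon>: "p \<le> \<epsilon>" "\<epsilon> \<le> 1 - \<alpha>"
    and hlow_closed_form: "hlow n p \<alpha> \<epsilon> ^ n = 1 - zeta p \<alpha> n \<epsilon> * qpar p \<alpha> ^ n"
  shows "1 - (1 - \<alpha> - \<epsilon>) * Phi p \<alpha> n \<le> hlow n p \<alpha> \<epsilon>"
proof -
  define D where "D = ((1 - \<alpha>) * p) ^ n - (\<alpha> * (1 - p)) ^ n"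
  define K where "K = ((1 - \<alpha>) * qpar p \<alpha>) ^ n / D"
  define t where "t = \<epsilon> / (1 - \<alpha>)"
  have "0 < qpar p \<alpha>"
    using p \<alpha> unfolding qpar_def by (intro add_nonneg_pos mult_pos_pos) auto
  then have "0 < ((1 - \<alpha>) * qpar p \<alpha>) ^ n"
    using \<alpha> by simp
  moreover have "0 \<le> (\<alpha> * (1 - p)) ^ n"
    using p \<alpha> by simp
  ultimately have "0 < D" "0 \<le> K" "K \<le> 1"
    using large by (auto simp: K_def D_def)
  have "0 \<le> t" "t \<le> 1"
    using p \<alpha> \<epsilon> by (auto simp: t_def)
  have K_eq: "K = qpar p \<alpha> ^ n * (1 - \<alpha>) ^ n / D"
    by (simp add: K_def power_mult_distrib mult.commute)
  have "(1 - \<alpha>) ^ n * (1 - t ^ n) = (1 - \<alpha>) ^ n - \<epsilon> ^ n"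
    using \<alpha> by (simp add: t_def power_divide field_simps)
  then have zeta_eq: "zeta p \<alpha> n \<epsilon> * qpar p \<alpha> ^ n = K * (1 - t ^ n)"
    unfolding zeta_def K_eq D_def[symmetric] by (simp add: mult_ac)
  have "(1 - \<alpha> - \<epsilon>) * (1 - \<alpha>) ^ (n - 1) = (1 - \<alpha>) ^ n * (1 - t)"
    using \<alpha> n by (simp add: t_def power_eq_if field_simps)
  then have Phi_eq: "(1 - \<alpha> - \<epsilon>) * Phi p \<alpha> n = K * (1 - t)"
    unfolding Phi_def K_eq D_def[symmetric] by (simp add: mult_ac)
  have "(1 - K * (1 - t)) ^ n \<le> hlow n p \<alpha> \<epsilon> ^ n"
    using power_convex_comb_le[OF \<open>0 \<le> K\<close> \<open>K \<le> 1\<close> \<open>0 \<le> t\<close> \<open>t \<le> 1\<close>, of n]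
    unfolding hlow_closed_form zeta_eq by (simp add: algebra_simps)
  moreover have "0 \<le> hlow n p \<alpha> \<epsilon>"
    using p \<alpha> n \<epsilon> by (intro hlow_nonneg) auto
  moreover have "Suc (n - 1) = n"
    using n by simp
  ultimately show ?thesis
    unfolding Phi_eq by (metis power_le_imp_le_base)
qed

lemma hlow_minus_hind_ge:
  assumes p: "1/2 \<le> p" "p < 1" and \<alpha>: "0 \<le> \<alpha>" "\<alpha> < 1/2" and n: "1 \<le> n"
    and large: "((1 - \<alpha>) * qpar p \<alpha>) ^ n + (\<alpha> * (1 - p)) ^ n \<le> ((1 - \<alpha>) * p) ^ n"
    and \<epsilon>: "p \<le> \<epsilon>" "\<epsilon> \<le> 1 - \<alpha>"
    and hlow_closed_form: "hlow n p \<alpha> \<epsilon> ^ n = 1 - zeta p \<alpha> n \<epsilon> * qpar p \<alpha> ^ n"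
  shows "(1 - \<alpha> - \<epsilon>) * (Phi p \<alpha> 1 - Phi p \<alpha> n) \<le> hlow n p \<alpha> \<epsilon> - hind n p \<alpha> \<epsilon>"
  using hlow_ge_one_minus_Phi[OF assms] hind_le_one_minus_Phi_1[of n p \<alpha> \<epsilon>] p \<alpha> n \<epsilon>
  by (simp add: algebra_simps)

lemma eventually_power_gap:
  assumes p: "1/2 < p" "p < 1" and \<alpha>: "0 < \<alpha>" "\<alpha> < 1/2"
  shows "\<forall>\<^sub>F n in sequentially.
    ((1 - \<alpha>) * qpar p \<alpha>) ^ n + (\<alpha> * (1 - p)) ^ n \<le> ((1 - \<alpha>) * p) ^ n"
proof -
  define r s where "r = qpar p \<alpha> / p" and "s = \<alpha> * (1 - p) / ((1 - \<alpha>) * p)"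
  have "0 < qpar p \<alpha>"
    using p \<alpha> unfolding qpar_def by (intro add_nonneg_pos mult_pos_pos) auto
  moreover have "qpar p \<alpha> - p = \<alpha> * (1 - 2 * p)"
    by (simp add: qpar_def algebra_simps)
  then have "qpar p \<alpha> < p"
    using p \<alpha> mult_pos_neg[of \<alpha> "1 - 2 * p"] by simp
  ultimately have "norm r < 1"
    using p by (simp add: r_def)
  have "\<alpha> * (1 - p) < (1 - \<alpha>) * p"
    using p \<alpha> by (intro mult_strict_mono) auto
  then have "norm s < 1"
    using p \<alpha> by (simp add: s_def)
  have "(\<lambda>n. r ^ n + s ^ n) \<longlonglongrightarrow> 0 + 0"
    by (intro tendsto_add LIMSEQ_power_zero \<open>norm r < 1\<close> \<open>norm s < 1\<close>)
  then have "\<forall>\<^sub>F n in sequentially. r ^ n + s ^ n < 1"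
    by (intro order_tendstoD(2)) auto
  moreover have "0 \<le> r" "0 \<le> s"
    using p \<alpha> \<open>0 < qpar p \<alpha>\<close> by (simp_all add: r_def s_def)
  ultimately show ?thesis
  proof (elim eventually_mono)
    fix n assume "r ^ n + s ^ n < 1" "0 \<le> r" "0 \<le> s"
    then have "(r ^ n + s ^ n) * ((1 - \<alpha>) * p) ^ n \<le> ((1 - \<alpha>) * p) ^ n"
      using p \<alpha> by (intro mult_left_le_one_le) auto
    moreover have "r * ((1 - \<alpha>) * p) = (1 - \<alpha>) * qpar p \<alpha>" "s * ((1 - \<alpha>) * p) = \<alpha> * (1 - p)"
      using p \<alpha> by (simp_all add: r_def s_def)
    ultimately show "((1 - \<alpha>) * qpar p \<alpha>) ^ n + (\<alpha> * (1 - p)) ^ n \<le> ((1 - \<alpha>) * p) ^ n"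
      by (metis distrib_right power_mult_distrib)
  qed
qed

lemma Pc1_bsc_uniform_input:
  assumes \<alpha>: "0 \<le> \<alpha>" "\<alpha> \<le> 1/2" and \<beta>: "0 \<le> \<beta>" "\<beta> \<le> 1/2"
  shows "Pc1 (PXZ1 (1/2) \<alpha> (bsc \<beta>)) = (1 - \<alpha>) * (1 - \<beta>) + \<alpha> * \<beta>"
    and "Pc1 (PYZ1 (1/2) \<alpha> (bsc \<beta>)) = 1 - \<beta>"
proof -
  define u v where "u = (1 - \<alpha>) * (1 - \<beta>) + \<alpha> * \<beta>" and "v = \<alpha> * (1 - \<beta>) + (1 - \<alpha>) * \<beta>"
  have "0 \<le> (1 - 2 * \<alpha>) * (1 - 2 * \<beta>)"
    using \<alpha> \<beta> by (intro mult_nonneg_nonneg) auto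
  then have "v \<le> u"
    by (simp add: u_def v_def algebra_simps)
  then show "Pc1 (PXZ1 (1/2) \<alpha> (bsc \<beta>)) = u"
    by (simp add: Pc1_def PXZ1_def bsc_def bern_def u_def v_def max_def field_simps)
  show "Pc1 (PYZ1 (1/2) \<alpha> (bsc \<beta>)) = 1 - \<beta>"
    using \<beta> by (simp add: Pc1_def PYZ1_def PY1_def bsc_def bern_def max_def field_simps)
qed

lemma hind_uniform_input_ge:
  assumes n: "0 < n" and \<alpha>: "0 \<le> \<alpha>" "\<alpha> < 1/2" and \<epsilon>: "1/2 \<le> \<epsilon>" "\<epsilon> \<le> 1 - \<alpha>"
  shows "1 - (1 - \<alpha> - \<epsilon>) / (1 - 2 * \<alpha>) \<le> hind n (1/2) \<alpha> \<epsilon>"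
proof -
  define \<beta> where "\<beta> = (1 - \<alpha> - \<epsilon>) / (1 - 2 * \<alpha>)"
  have \<beta>: "0 \<le> \<beta>" "\<beta> \<le> 1/2"
    using \<alpha> \<epsilon> by (auto simp: \<beta>_def divide_simps)
  have "\<beta> * (1 - 2 * \<alpha>) = 1 - \<alpha> - \<epsilon>"
    using \<alpha> by (simp add: \<beta>_def)
  then have "(1 - \<alpha>) * (1 - \<beta>) + \<alpha> * \<beta> = \<epsilon>"
    by (simp add: algebra_simps)
  then show ?thesis
    using n \<alpha> \<beta> channel_bsc[of \<beta>] Pc1_le_hind[of n "1/2" \<alpha> "bsc \<beta>" \<epsilon>]
    by (simp add: Pc1_bsc_uniform_input \<beta>_def)
qed

lemma hlow_uniform_input_le:
  assumes \<alpha>: "0 \<le> \<alpha>" "\<alpha> < 1/2" and n: "1 \<le> n" and \<epsilon>: "1/2 \<le> \<epsilon>" "\<epsilon> \<le> 1 - \<alpha>"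
    and hlow_closed_form: "hlow n (1/2) \<alpha> \<epsilon> ^ n = 1 - zeta (1/2) \<alpha> n \<epsilon> * qpar (1/2) \<alpha> ^ n"
  shows "hlow n (1/2) \<alpha> \<epsilon> \<le> \<epsilon> / (1 - \<alpha>)"
proof -
  define A E B where "A = (1 - \<alpha>) ^ n" and "E = \<epsilon> ^ n" and "B = \<alpha> ^ n"
  have "B < A"
    unfolding A_def B_def using \<alpha> n by (intro power_strict_mono) auto
  have "0 \<le> B" "0 \<le> E" "E \<le> A"
    using \<alpha> \<epsilon> by (auto simp: A_def B_def E_def intro: power_mono)
  have "((1 - \<alpha>) * (1/2)) ^ n = A / 2 ^ n" "(\<alpha> * (1 - 1/2)) ^ n = B / 2 ^ n"
    by (simp_all add: A_def B_def power_divide)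
  then have "((1 - \<alpha>) * (1/2)) ^ n - (\<alpha> * (1 - 1/2)) ^ n = (A - B) / 2 ^ n"
    by (simp add: diff_divide_distrib)
  moreover have "qpar (1/2) \<alpha> ^ n = 1 / 2 ^ n"
    by (simp add: qpar_def power_divide add_divide_distrib[symmetric])
  ultimately have "zeta (1/2) \<alpha> n \<epsilon> * qpar (1/2) \<alpha> ^ n = (A - E) / (A - B)"
    by (simp add: zeta_def A_def E_def)
  moreover have "1 - (A - E) / (A - B) \<le> E / A"
  proof -
    have "E / A - (1 - (A - E) / (A - B)) = B * (A - E) / (A * (A - B))"
      using \<open>B < A\<close> \<open>0 \<le> B\<close> by (simp add: field_simps)
    also have "\<dots> \<ge> 0"
      using \<open>B < A\<close> \<open>0 \<le> B\<close> \<open>E \<le> A\<close> by (intro divide_nonneg_nonneg mult_nonneg_nonneg) auto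
    finally show ?thesis by simp
  qed
  ultimately have "hlow n (1/2) \<alpha> \<epsilon> ^ n \<le> (\<epsilon> / (1 - \<alpha>)) ^ n"
    by (simp add: hlow_closed_form power_divide A_def E_def)
  moreover have "0 \<le> \<epsilon> / (1 - \<alpha>)" "Suc (n - 1) = n"
    using \<alpha> \<epsilon> n by auto
  ultimately show ?thesis
    by (metis power_le_imp_le_base)
qed

lemma uniform_input_gap:
  fixes \<alpha> \<epsilon> :: real
  assumes \<alpha>: "0 \<le> \<alpha>" "\<alpha> < 1/2" and \<epsilon>: "1/2 \<le> \<epsilon>"
  shows "\<epsilon> / (1 - \<alpha>) \<le> 1 - (1 - \<alpha> - \<epsilon>) / (1 - 2 * \<alpha>) + \<alpha> / (2 * (1 - \<alpha>))"
proof -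
  have pos: "0 < 1 - \<alpha>" "0 < 1 - 2 * \<alpha>"
    using \<alpha> by auto
  have "(\<epsilon> - \<alpha>) * (2 * (1 - \<alpha>)) - (2 * \<epsilon> - \<alpha>) * (1 - 2 * \<alpha>) = \<alpha> * (2 * \<epsilon> - 1)"
    by (simp add: algebra_simps)
  moreover have "0 \<le> \<alpha> * (2 * \<epsilon> - 1)"
    using \<alpha> \<epsilon> by simp
  ultimately have "(2 * \<epsilon> - \<alpha>) / (2 * (1 - \<alpha>)) \<le> (\<epsilon> - \<alpha>) / (1 - 2 * \<alpha>)"
    using pos by (simp add: field_simps)
  moreover have "\<epsilon> / (1 - \<alpha>) = (2 * \<epsilon> - \<alpha>) / (2 * (1 - \<alpha>)) + \<alpha> / (2 * (1 - \<alpha>))"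
  proof -
    have split: "\<epsilon> / c = (2 * \<epsilon> - \<alpha>) / (2 * c) + \<alpha> / (2 * c)" if "c \<noteq> 0" for c :: real
      using that by (simp add: field_simps)
    show ?thesis
      by (rule split) (use pos in simp)
  qed
  moreover have "1 - (1 - \<alpha> - \<epsilon>) / (1 - 2 * \<alpha>) = (\<epsilon> - \<alpha>) / (1 - 2 * \<alpha>)"
    using pos by (simp add: field_simps)
  ultimately show ?thesis
    by linarith
qed

lemma hlow_uniform_input_le_hind_add:
  assumes \<alpha>: "0 \<le> \<alpha>" "\<alpha> < 1/2" and n: "1 \<le> n" and \<epsilon>: "1/2 \<le> \<epsilon>" "\<epsilon> \<le> 1 - \<alpha>"
    and hlow_closed_form: "hlow n (1/2) \<alpha> \<epsilon> ^ n = 1 - zeta (1/2) \<alpha> n \<epsilon> * qpar (1/2) \<alpha> ^ n"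
  shows "hlow n (1/2) \<alpha> \<epsilon> \<le> hind n (1/2) \<alpha> \<epsilon> + \<alpha> / (2 * (1 - \<alpha>))"
proof -
  have "hlow n (1/2) \<alpha> \<epsilon> \<le> \<epsilon> / (1 - \<alpha>)"
    by (rule hlow_uniform_input_le[OF assms])
  moreover have "1 - (1 - \<alpha> - \<epsilon>) / (1 - 2 * \<alpha>) \<le> hind n (1/2) \<alpha> \<epsilon>"
    using \<alpha> n \<epsilon> by (intro hind_uniform_input_ge) auto
  ultimately show ?thesis
    using uniform_input_gap[OF \<alpha> \<epsilon>(1)] by linarith
qed

theorem corollary3:
  fixes p \<alpha> :: real and epsL :: "nat \<Rightarrow> real"
  assumes hp: "1/2 \<le> p" "p < 1"
    and h\<alpha>: "0 \<le> \<alpha>" "\<alpha> < 1/2"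
    and hpa: "1 - \<alpha> > p"
    and hL: "\<forall>n\<ge>1. p \<le> epsL n \<and> epsL n < 1 - \<alpha> \<and>
              (\<forall>\<epsilon>\<in>{epsL n..1 - \<alpha>}. hlow n p \<alpha> \<epsilon> ^ n = 1 - zeta p \<alpha> n \<epsilon> * qpar p \<alpha> ^ n)"
  shows "(p > 1/2 \<and> \<alpha> > 0 \<longrightarrow>
            (\<forall>\<^sub>F n in sequentially. \<forall>\<epsilon>\<in>{epsL n..1 - \<alpha>}.
               hlow n p \<alpha> \<epsilon> - hind n p \<alpha> \<epsilon> \<ge> (1 - \<alpha> - \<epsilon>) * (Phi p \<alpha> 1 - Phi p \<alpha> n)))
       \<and> (p = 1/2 \<longrightarrow>
            (\<forall>n\<ge>1. \<forall>\<epsilon>\<in>{epsL n..1 - \<alpha>}.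
               hind n p \<alpha> \<epsilon> \<le> hlow n p \<alpha> \<epsilon> \<and>
               hlow n p \<alpha> \<epsilon> \<le> hind n p \<alpha> \<epsilon> + \<alpha> / (2 * (1 - \<alpha>))))"
proof (intro conjI impI)
  assume "p > 1/2 \<and> \<alpha> > 0"
  then have "\<forall>\<^sub>F n in sequentially.
      ((1 - \<alpha>) * qpar p \<alpha>) ^ n + (\<alpha> * (1 - p)) ^ n \<le> ((1 - \<alpha>) * p) ^ n"
    using hp h\<alpha> by (intro eventually_power_gap) auto
  then show "\<forall>\<^sub>F n in sequentially. \<forall>\<epsilon>\<in>{epsL n..1 - \<alpha>}.
      hlow n p \<alpha> \<epsilon> - hind n p \<alpha> \<epsilon> \<ge> (1 - \<alpha> - \<epsilon>) * (Phi p \<alpha> 1 - Phi p \<alpha> n)"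
    using eventually_ge_at_top[of 1]
  proof eventually_elim
    case (elim n)
    then show ?case
      using hL hp h\<alpha> by (intro ballI hlow_minus_hind_ge) auto
  qed
next
  assume p: "p = 1/2"
  show "\<forall>n\<ge>1. \<forall>\<epsilon>\<in>{epsL n..1 - \<alpha>}.
      hind n p \<alpha> \<epsilon> \<le> hlow n p \<alpha> \<epsilon> \<and> hlow n p \<alpha> \<epsilon> \<le> hind n p \<alpha> \<epsilon> + \<alpha> / (2 * (1 - \<alpha>))"
  proof (intro allI impI ballI conjI)
    fix n :: nat and \<epsilon> assume "1 \<le> n" "\<epsilon> \<in> {epsL n..1 - \<alpha>}"
    with hL h\<alpha> p show "hind n p \<alpha> \<epsilon> \<le> hlow n p \<alpha> \<epsilon>"
      by (intro hind_le_hlow) auto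
    from \<open>1 \<le> n\<close> \<open>\<epsilon> \<in> {epsL n..1 - \<alpha>}\<close> hL h\<alpha>
    show "hlow n p \<alpha> \<epsilon> \<le> hind n p \<alpha> \<epsilon> + \<alpha> / (2 * (1 - \<alpha>))"
      unfolding p by (intro hlow_uniform_input_le_hind_add) auto
  qed
qed

end
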